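(* Let $G$ be a graph and let $\mathcal{A}$ and $\mathcal{B}$ be two distinct min-max clique coverings of $G$ that both satisfy simple intersection. If there are two distinct cliques $A,A'\in\mathcal{A}$ and two distinct cliques $B,B'\in\mathcal{B}$ such that $A\cap A'\cap B\cap B'\neq\emptyset$, then $A\cap A'=B\cap B'$.
   Context: A clique covering of a graph is a set of cliques such that every edge lies in at least one of them; $\operatorname{cc}(G)$ is its minimum size. A min-max clique covering is a clique covering of size $\operatorname{cc}(G)$ consisting of maximal cliques; it has simple intersection if no three distinct cliques of it share a vertex. *)

theory Defs
  imports Main
begin

definition simple_graph :: "'a set \<Rightarrow> ('a \<Rightarrow> 'a \<Rightarrow> bool) \<Rightarrow> bool" where
  "simple_graph V E \<longleftrightarrow> finite V \<and> (\<forall>x y. E x y \<longrightarrow> x \<in> V \<and> y \<in> V \<and> x \<noteq> y \<and> E y x)"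

definition is_clique :: "'a set \<Rightarrow> ('a \<Rightarrow> 'a \<Rightarrow> bool) \<Rightarrow> 'a set \<Rightarrow> bool" where
  "is_clique V E C \<longleftrightarrow> C \<subseteq> V \<and> (\<forall>x\<in>C. \<forall>y\<in>C. x \<noteq> y \<longrightarrow> E x y)"

definition maximal_clique :: "'a set \<Rightarrow> ('a \<Rightarrow> 'a \<Rightarrow> bool) \<Rightarrow> 'a set \<Rightarrow> bool" where
  "maximal_clique V E C \<longleftrightarrow> is_clique V E C \<and> (\<forall>D. is_clique V E D \<and> C \<subseteq> D \<longrightarrow> D = C)"

definition clique_covering :: "'a set \<Rightarrow> ('a \<Rightarrow> 'a \<Rightarrow> bool) \<Rightarrow> 'a set set \<Rightarrow> bool" where
  "clique_covering V E \<C> \<longleftrightarrow> (\<forall>C\<in>\<C>. is_clique V E C) \<and> (\<forall>x y. E x y \<longrightarrow> (\<exists>C\<in>\<C>. x \<in> C \<and> y \<in> C))"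

definition cc :: "'a set \<Rightarrow> ('a \<Rightarrow> 'a \<Rightarrow> bool) \<Rightarrow> nat" where
  "cc V E = (LEAST n. \<exists>\<C>. clique_covering V E \<C> \<and> finite \<C> \<and> card \<C> = n)"

definition min_max_clique_covering :: "'a set \<Rightarrow> ('a \<Rightarrow> 'a \<Rightarrow> bool) \<Rightarrow> 'a set set \<Rightarrow> bool" where
  "min_max_clique_covering V E \<C> \<longleftrightarrow> clique_covering V E \<C> \<and> finite \<C> \<and> card \<C> = cc V E
     \<and> (\<forall>C\<in>\<C>. maximal_clique V E C)"

definition simple_intersection :: "'a set set \<Rightarrow> bool" where
  "simple_intersection \<C> \<longleftrightarrow> (\<forall>A\<in>\<C>. \<forall>B\<in>\<C>. \<forall>C\<in>\<C>. A \<noteq> B \<and> B \<noteq> C \<and> A \<noteq> C \<longrightarrow> A \<inter> B \<inter> C = {})"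

end

theory Submission
  imports Defs
begin

text \<open>In a covering by maximal cliques with simple intersection, a vertex v lying in two
  cliques A and A' of the covering has closed neighbourhood exactly A \<union> A', and A \<inter> A'
  turns out to be the set of vertices whose closed neighbourhood equals that of v. This
  description does not mention the covering, so any two such coverings yield the same set.\<close>

definition closed_nbhd :: "('a \<Rightarrow> 'a \<Rightarrow> bool) \<Rightarrow> 'a \<Rightarrow> 'a set" where
  "closed_nbhd E u = insert u {w. E u w}"

lemma closed_nbhd_eq_Un:
  assumes cov: "clique_covering V E \<C>" and si: "simple_intersection \<C>"
    and A: "A \<in> \<C>" and A': "A' \<in> \<C>" and "A \<noteq> A'" and x: "x \<in> A" "x \<in> A'"
  shows "closed_nbhd E x = A \<union> A'"
proof
  show "closed_nbhd E x \<subseteq> A \<union> A'"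
  proof
    fix w assume "w \<in> closed_nbhd E x"
    then consider "w = x" | "E x w" unfolding closed_nbhd_def by blast
    then show "w \<in> A \<union> A'"
    proof cases
      case 1 then show ?thesis using x by blast
    next
      case 2
      then obtain D where D: "D \<in> \<C>" "x \<in> D" "w \<in> D"
        using cov unfolding clique_covering_def by blast
      have "D = A \<or> D = A'"
      proof (rule ccontr)
        assume "\<not> (D = A \<or> D = A')"
        then have "A \<inter> A' \<inter> D = {}"
          using si A A' D(1) \<open>A \<noteq> A'\<close> unfolding simple_intersection_def by blast
        then show False using x D(2) by blast
      qed
      then show ?thesis using D by blast
    qed
  qed
  have "is_clique V E A" "is_clique V E A'" using cov A A' unfolding clique_covering_def by auto
  then show "A \<union> A' \<subseteq> closed_nbhd E x"
    using x unfolding is_clique_def closed_nbhd_def by auto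
qed

lemma maximal_clique_mem_if_subset_closed_nbhd:
  assumes sg: "simple_graph V E" and mY: "maximal_clique V E Y"
    and u: "u \<in> V" and sub: "Y \<subseteq> closed_nbhd E u"
  shows "u \<in> Y"
proof -
  have cY: "is_clique V E Y" using mY unfolding maximal_clique_def by blast
  have "is_clique V E (insert u Y)"
    unfolding is_clique_def
  proof (intro conjI ballI impI)
    show "insert u Y \<subseteq> V" using cY u unfolding is_clique_def by blast
  next
    fix a b assume ab: "a \<in> insert u Y" "b \<in> insert u Y" "a \<noteq> b"
    consider "a = u" | "b = u" | "a \<in> Y" "b \<in> Y" using ab by blast
    then show "E a b"
    proof cases
      case 1 then show ?thesis using ab sub unfolding closed_nbhd_def by blast
    next
      case 2
      then have "E u a" using ab sub unfolding closed_nbhd_def by blast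
      then show ?thesis using sg 2 unfolding simple_graph_def by blast
    next
      case 3 then show ?thesis using ab cY unfolding is_clique_def by blast
    qed
  qed
  then have "insert u Y = Y" using mY subset_insertI unfolding maximal_clique_def by metis
  then show ?thesis by blast
qed

lemma Int_eq_closed_nbhd_class:
  assumes sg: "simple_graph V E" and cov: "clique_covering V E \<C>"
    and si: "simple_intersection \<C>" and mx: "\<forall>D\<in>\<C>. maximal_clique V E D"
    and A: "A \<in> \<C>" and A': "A' \<in> \<C>" and ne: "A \<noteq> A'" and v: "v \<in> A" "v \<in> A'"
  shows "A \<inter> A' = {u. closed_nbhd E u = closed_nbhd E v}"
proof
  have Nv: "closed_nbhd E v = A \<union> A'" using closed_nbhd_eq_Un[OF cov si A A' ne v] .
  show "A \<inter> A' \<subseteq> {u. closed_nbhd E u = closed_nbhd E v}"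
  proof
    fix u assume "u \<in> A \<inter> A'"
    then show "u \<in> {u. closed_nbhd E u = closed_nbhd E v}"
      using closed_nbhd_eq_Un[OF cov si A A' ne] Nv by simp
  qed
  show "{u. closed_nbhd E u = closed_nbhd E v} \<subseteq> A \<inter> A'"
  proof
    fix u assume "u \<in> {u. closed_nbhd E u = closed_nbhd E v}"
    then have Nu: "closed_nbhd E u = A \<union> A'" using Nv by simp
    have mA: "maximal_clique V E A" "maximal_clique V E A'" using mx A A' by auto
    have "u \<in> A \<union> A'" using Nu unfolding closed_nbhd_def by blast
    moreover have "A \<union> A' \<subseteq> V"
      using mA unfolding maximal_clique_def is_clique_def by simp
    ultimately have "u \<in> V" by blast
    have "A \<subseteq> closed_nbhd E u" "A' \<subseteq> closed_nbhd E u" using Nu by auto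
    then show "u \<in> A \<inter> A'"
      using maximal_clique_mem_if_subset_closed_nbhd[OF sg mA(1) \<open>u \<in> V\<close>]
        maximal_clique_mem_if_subset_closed_nbhd[OF sg mA(2) \<open>u \<in> V\<close>] by blast
  qed
qed

theorem mainTheorem17:
  fixes V :: "'a set" and E :: "'a \<Rightarrow> 'a \<Rightarrow> bool" and \<A> \<B> :: "'a set set"
  assumes "simple_graph V E"
    and "min_max_clique_covering V E \<A>" and "min_max_clique_covering V E \<B>"
    and "\<A> \<noteq> \<B>"
    and "simple_intersection \<A>" and "simple_intersection \<B>"
    and "A \<in> \<A>" and "A' \<in> \<A>" and "A \<noteq> A'"
    and "B \<in> \<B>" and "B' \<in> \<B>" and "B \<noteq> B'"
    and "A \<inter> A' \<inter> B \<inter> B' \<noteq> {}"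
  shows "A \<inter> A' = B \<inter> B'"
proof -
  obtain v where v: "v \<in> A" "v \<in> A'" "v \<in> B" "v \<in> B'" using assms(13) by blast
  have "A \<inter> A' = {u. closed_nbhd E u = closed_nbhd E v}"
    using Int_eq_closed_nbhd_class[OF assms(1) _ assms(5) _ assms(7-9) v(1,2)] assms(2)
    unfolding min_max_clique_covering_def by blast
  moreover have "B \<inter> B' = {u. closed_nbhd E u = closed_nbhd E v}"
    using Int_eq_closed_nbhd_class[OF assms(1) _ assms(6) _ assms(10-12) v(3,4)] assms(3)
    unfolding min_max_clique_covering_def by blast
  ultimately show ?thesis by simp
qed

end
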